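(* Let $S=\frac1n\sum_{i=1}^n\mathbf x_i\mathbf x_i^\top$ and let $k,k'\ge0$ be integers. Then there are real numbers $\alpha_1,\dots,\alpha_5$ (depending on $n,d,k,k'$) such that $$\mathbb E\big[S\mathbf u_s\mathbf u_s^\top S^k\mathbf u_t\mathbf u_t^\top S^{k'}\big]=\alpha_1\mathbf u_s\mathbf u_s^\top+\alpha_2\mathbf u_t\mathbf u_t^\top+\alpha_3I\quad\text{for any }s\neq t,$$ $$\mathbb E\big[S\mathbf u_s\mathbf u_s^\top S^k\mathbf u_s\mathbf u_s^\top S^{k'}\big]=\alpha_4\mathbf u_s\mathbf u_s^\top+\alpha_5I\quad\text{for any } s.$$
   Context: $\mathbf x_1,\dots,\mathbf x_n$ are i.i.d. $\mathcal N(0,I_d)$. $\{\mathbf u_s\}_{s=1}^d$ is an orthonormal basis of $\mathbb R^d$. *)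

theory Defs
  imports "HOL-Analysis.Analysis" "HOL-Probability.Probability"
begin

definition outer :: "real^'d \<Rightarrow> real^'d \<Rightarrow> real^'d^'d" where
  "outer u v = (\<chi> i j. u $ i * v $ j)"

definition mpow :: "real^'d^'d \<Rightarrow> nat \<Rightarrow> real^'d^'d" where
  "mpow A k = (((**) A) ^^ k) (mat 1)"

text \<open>Joint law of n i.i.d. N(0, I_d) vectors x_0,...,x_{n-1}: all n*d coordinates
  (i,j) are i.i.d. standard normal real variables.\<close>
definition gauss_sample :: "nat \<Rightarrow> ((nat \<times> 'd::finite) \<Rightarrow> real) measure" where
  "gauss_sample n = PiM ({..<n} \<times> UNIV) (\<lambda>_. density lborel std_normal_density)"

definition xvec :: "((nat \<times> 'd::finite) \<Rightarrow> real) \<Rightarrow> nat \<Rightarrow> real^'d" where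
  "xvec \<omega> i = (\<chi> j. \<omega> (i, j))"

definition sample_cov :: "nat \<Rightarrow> ((nat \<times> 'd::finite) \<Rightarrow> real) \<Rightarrow> real^'d^'d" where
  "sample_cov n \<omega> = (1 / real n) *\<^sub>R (\<Sum>i<n. outer (xvec \<omega> i) (xvec \<omega> i))"

end

theory Submission
  imports Defs
begin

text \<open>
  The law of the sample \<open>x\<^sub>1, \<dots>, x\<^sub>n\<close> is invariant under \<open>x\<^sub>i \<mapsto> Q x\<^sub>i\<close> for every orthogonal
  \<open>Q\<close> (Lebesgue measure and the density \<open>exp (-\<bar>x\<bar>\<^sup>2/2)\<close> are both invariant), and this replaces
  \<open>S\<close> by \<open>Q S Q\<^sup>T\<close>.  Hence \<open>M(a, b) = E[S a a\<^sup>T S^k b b\<^sup>T S^k']\<close> satisfies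
  \<open>M(Q a, Q b) = Q M(a, b) Q\<^sup>T\<close>.  For standard basis vectors \<open>e\<^sub>p, e\<^sub>q\<close>, conjugating with sign
  changes of single coordinates and with transpositions of coordinates outside \<open>{p, q}\<close> shows that
  \<open>M(e\<^sub>p, e\<^sub>q)\<close> is diagonal with a common entry outside \<open>{p, q}\<close>, i.e. a combination of
  \<open>e\<^sub>p e\<^sub>p\<^sup>T\<close>, \<open>e\<^sub>q e\<^sub>q\<^sup>T\<close> and \<open>I\<close>.  The orthogonal matrix whose \<open>j\<close>-th column is \<open>u (\<sigma> j)\<close>,
  where \<open>\<sigma> p = s\<close> and \<open>\<sigma> q = t\<close>, carries this to every orthonormal basis with the same
  coefficients.
\<close>

section \<open>Matrices\<close>

lemma outer_scaleR: "outer (c *\<^sub>R a) (d *\<^sub>R b) = (c * d) *\<^sub>R outer a b"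
  by (simp add: vec_eq_iff outer_def)

lemma outer_matrix_vector_mult:
  "outer (Q *v a) (Q *v b) = Q ** outer a b ** transpose Q"
  by (simp add: vec_eq_iff outer_def matrix_matrix_mult_def matrix_vector_mult_def transpose_def
      sum_distrib_left sum_distrib_right mult_ac sum_product)

lemma outer_axis_nth: "outer (axis p 1) (axis q 1) $ x $ y = (if x = p \<and> y = q then 1 else (0::real))"
  by (simp add: outer_def axis_def)

lemma linear_matrix_sandwich: "linear (\<lambda>A::real^'n::finite^'m::finite. Q ** A ** R)"
  by (rule linearI)
    (simp_all add: vec_eq_iff matrix_matrix_mult_def sum.distrib algebra_simps
      sum_distrib_left sum_distrib_right)

lemma orthogonal_matrix_cancel:
  assumes "orthogonal_matrix (Q::real^'n::finite^'n)"
  shows "transpose Q ** Q = mat 1" "Q ** transpose Q = mat 1"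
    "X ** transpose Q ** Q = X" "X ** Q ** transpose Q = X"
  using assms by (auto simp: orthogonal_matrix_def matrix_mul_assoc[symmetric])

lemma mpow_orthogonal_conj:
  assumes "orthogonal_matrix (Q::real^'n::finite^'n)"
  shows "mpow (Q ** A ** transpose Q) k = Q ** mpow A k ** transpose Q"
  by (induction k)
    (simp_all add: mpow_def matrix_mul_assoc orthogonal_matrix_cancel[OF assms])

lemma orthogonal_conj_outer_combination:
  assumes "orthogonal_matrix (Q::real^'n::finite^'n)"
  shows "Q ** (\<alpha> *\<^sub>R outer x x + \<beta> *\<^sub>R outer y y + \<gamma> *\<^sub>R mat 1) ** transpose Q
       = \<alpha> *\<^sub>R outer (Q *v x) (Q *v x) + \<beta> *\<^sub>R outer (Q *v y) (Q *v y) + \<gamma> *\<^sub>R mat 1"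
  by (simp add: linear_add[OF linear_matrix_sandwich] linear_scale[OF linear_matrix_sandwich]
      outer_matrix_vector_mult orthogonal_matrix_cancel[OF assms])

abbreviation orthonormal_frame :: "('n \<Rightarrow> real^'m) \<Rightarrow> bool" where
  "orthonormal_frame v \<equiv> \<forall>s t. v s \<bullet> v t = (if s = t then 1 else 0)"

definition cols_matrix :: "('n \<Rightarrow> real^'m) \<Rightarrow> real^'n^'m" where
  "cols_matrix v = (\<chi> i j. v j $ i)"

lemma cols_matrix_axis [simp]: "cols_matrix v *v axis j 1 = v j"
  by (simp add: vec_eq_iff cols_matrix_def matrix_vector_mult_def axis_def if_distrib cong: if_cong)

lemma orthogonal_matrix_cols_matrix:
  fixes v :: "'n::finite \<Rightarrow> real^'n"
  assumes "orthonormal_frame v"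
  shows "orthogonal_matrix (cols_matrix v)"
proof -
  have "column j (cols_matrix v) = v j" for j
    by (simp add: vec_eq_iff column_def cols_matrix_def)
  then show ?thesis
    using assms by (simp add: orthogonal_matrix_orthonormal_columns norm_eq_1 orthogonal_def)
qed

lemma orthonormal_frame_comp:
  "orthonormal_frame v \<Longrightarrow> inj \<sigma> \<Longrightarrow> orthonormal_frame (v \<circ> \<sigma>)"
  by (simp add: inj_eq)

lemma inj_swap_points: "inj (id(a := b, b := a))"
  by (auto simp: inj_def)

lemma inj_map_two_points:
  assumes "p \<noteq> q" "s \<noteq> t"
  shows "\<exists>\<sigma>::'a \<Rightarrow> 'a. inj \<sigma> \<and> \<sigma> p = s \<and> \<sigma> q = t"
proof -
  define \<tau> where "\<tau> = id(p := s, s := p)"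
  have "\<tau> q \<noteq> s"
    using assms(1) by (auto simp: \<tau>_def)
  then have "(id(\<tau> q := t, t := \<tau> q) \<circ> \<tau>) p = s" "(id(\<tau> q := t, t := \<tau> q) \<circ> \<tau>) q = t"
    using assms(2) by (auto simp: \<tau>_def)
  moreover have "inj (id(\<tau> q := t, t := \<tau> q) \<circ> \<tau>)"
    unfolding \<tau>_def by (intro inj_compose inj_swap_points)
  ultimately show ?thesis by blast
qed

definition signed_perm_matrix :: "('n \<Rightarrow> real) \<Rightarrow> ('n \<Rightarrow> 'n) \<Rightarrow> real^'n^'n" where
  "signed_perm_matrix c \<sigma> = cols_matrix (\<lambda>j. c j *\<^sub>R axis (\<sigma> j) 1)"

lemma orthogonal_signed_perm_matrix:
  fixes \<sigma> :: "'n::finite \<Rightarrow> 'n"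
  assumes "\<And>j. c j * c j = 1" "inj \<sigma>"
  shows "orthogonal_matrix (signed_perm_matrix c \<sigma>)"
  unfolding signed_perm_matrix_def
  using assms by (intro orthogonal_matrix_cols_matrix) (auto simp: inner_axis_axis inj_eq)

lemma signed_perm_matrix_conj_nth:
  fixes M :: "real^'n::finite^'n"
  assumes "inj \<sigma>"
  shows "(signed_perm_matrix c \<sigma> ** M ** transpose (signed_perm_matrix c \<sigma>)) $ \<sigma> a $ \<sigma> b
       = c a * c b * M $ a $ b"
proof -
  have P: "signed_perm_matrix c \<sigma> $ \<sigma> a $ j = (if j = a then c a else 0)" for a j
    using assms by (auto simp: signed_perm_matrix_def cols_matrix_def axis_def inj_eq)
  show ?thesis
    by (simp add: matrix_matrix_mult_def transpose_def P if_distrib if_distribR cong: if_cong)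
qed

lemma matrix_eq_outer_axis_combination:
  fixes M :: "real^'n::finite^'n"
  assumes offdiag: "\<And>x y. x \<noteq> y \<Longrightarrow> M $ x $ y = 0"
    and diag: "\<And>x y. x \<notin> {p, q} \<Longrightarrow> y \<notin> {p, q} \<Longrightarrow> M $ x $ x = M $ y $ y"
  shows "\<exists>\<alpha> \<beta> \<gamma>.
    M = \<alpha> *\<^sub>R outer (axis p 1) (axis p 1) + \<beta> *\<^sub>R outer (axis q 1) (axis q 1) + \<gamma> *\<^sub>R mat 1"
proof -
  obtain \<gamma> where \<gamma>: "\<And>x. x \<notin> {p, q} \<Longrightarrow> M $ x $ x = \<gamma>"
    using diag by blast
  let ?\<alpha> = "M $ p $ p - \<gamma>" and ?\<beta> = "if q = p then 0 else M $ q $ q - \<gamma>"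
  have "M = ?\<alpha> *\<^sub>R outer (axis p 1) (axis p 1) + ?\<beta> *\<^sub>R outer (axis q 1) (axis q 1)
      + \<gamma> *\<^sub>R mat 1"
    using offdiag \<gamma> by (auto simp: vec_eq_iff outer_axis_nth mat_def)
  then show ?thesis by blast
qed

section \<open>Measurability of matrix expressions\<close>

lemma borel_measurable_vec_nth [measurable (raw)]:
  fixes f :: "'a \<Rightarrow> 'b::euclidean_space^'n::finite"
  shows "f \<in> borel_measurable M \<Longrightarrow> (\<lambda>x. f x $ i) \<in> borel_measurable M"
  by (rule borel_measurable_continuous_on[OF continuous_on_component[OF continuous_on_id]])

lemma borel_measurable_vec_lambda [measurable (raw)]:
  fixes f :: "'a \<Rightarrow> 'n::finite \<Rightarrow> 'b::euclidean_space"
  assumes "\<And>i. (\<lambda>x. f x i) \<in> borel_measurable M"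
  shows "(\<lambda>x. vec_lambda (f x)) \<in> borel_measurable M"
proof -
  have "(\<lambda>x. \<Sum>i\<in>UNIV. f x i \<bullet> b $ i) \<in> borel_measurable M" for b :: "'b^'n"
    using assms by (intro borel_measurable_sum borel_measurable_inner) auto
  then have "(\<lambda>x. vec_lambda (f x) \<bullet> b) \<in> borel_measurable M" for b :: "'b^'n"
    by (simp add: inner_vec_def)
  then show ?thesis
    by (subst borel_measurable_euclidean_space) blast
qed

lemma borel_measurable_matrix_mult [measurable (raw)]:
  fixes f :: "'a \<Rightarrow> real^'n::finite^'m::finite" and g :: "'a \<Rightarrow> real^'k::finite^'n"
  assumes "f \<in> borel_measurable M" "g \<in> borel_measurable M"
  shows "(\<lambda>x. f x ** g x) \<in> borel_measurable M"
  unfolding matrix_matrix_mult_def using assms by measurable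

lemma borel_measurable_mpow [measurable (raw)]:
  "f \<in> borel_measurable M \<Longrightarrow> (\<lambda>x. mpow (f x) k) \<in> borel_measurable M"
  by (induction k) (simp_all add: mpow_def)

lemma borel_measurable_outer [measurable (raw)]:
  assumes "f \<in> borel_measurable M" "g \<in> borel_measurable M"
  shows "(\<lambda>x. outer (f x) (g x)) \<in> borel_measurable M"
  unfolding outer_def using assms by measurable

lemma borel_measurable_matrix_vector_mult [measurable]:
  fixes Q :: "real^'n::finite^'m::finite"
  shows "(\<lambda>x. Q *v x) \<in> borel_measurable borel"
  unfolding matrix_vector_mult_def by measurable

lemma borel_measurable_sample_cov [measurable]:
  "sample_cov n \<in> borel_measurable (gauss_sample n)"
  unfolding sample_cov_def xvec_def gauss_sample_def by measurable

section \<open>Rotation invariance of the Gaussian sample\<close>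

lemma vimage_orthogonal_matrix:
  fixes Q :: "real^'n::finite^'n"
  assumes "orthogonal_matrix Q"
  shows "(\<lambda>x. Q *v x) -` S = (\<lambda>x. transpose Q *v x) ` S"
proof -
  have "x = transpose Q *v (Q *v x)" "y = Q *v (transpose Q *v y)" for x y
    by (simp_all add: matrix_vector_mul_assoc orthogonal_matrix_cancel[OF assms]
        del: transpose_matrix_vector)
  then show ?thesis by (auto simp: image_iff)
qed

lemma lborel_orthogonal_invariant:
  fixes Q :: "real^'n::{finite,wellorder}^'n::_"
  assumes Q: "orthogonal_matrix Q"
  shows "distr lborel borel (\<lambda>x. Q *v x) = lborel"
proof (rule lborel_eqI[symmetric])
  fix l u :: "real^'n::_" assume le: "\<And>b. b \<in> Basis \<Longrightarrow> l \<bullet> b \<le> u \<bullet> b"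
  let ?T = "\<lambda>x. transpose Q *v x"
  have T: "orthogonal_transformation ?T"
    using Q by (simp add: orthogonal_transformation_matrix del: transpose_matrix_vector)
  have "open (?T ` box l u)"
    unfolding vimage_orthogonal_matrix[OF Q, symmetric]
    by (intro continuous_open_vimage open_box linear_continuous_at matrix_vector_mul_bounded_linear)
  then have "emeasure (distr lborel borel (\<lambda>x. Q *v x)) (box l u) = emeasure lebesgue (?T ` box l u)"
    by (simp add: emeasure_distr vimage_orthogonal_matrix[OF Q])
  also have "\<dots> = emeasure lborel (box l u)"
    using measurable_orthogonal_image[OF T] measure_orthogonal_image[OF T]
    by (simp add: emeasure_eq_measure2)
  also have "\<dots> = (\<Prod>b\<in>Basis. (u - l) \<bullet> b)"
    using le by (simp add: emeasure_lborel_box_eq)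
  finally show "emeasure (distr lborel borel (\<lambda>x. Q *v x)) (box l u) = (\<Prod>b\<in>Basis. (u - l) \<bullet> b)" .
qed simp

abbreviation std_normal :: "real measure" where
  "std_normal \<equiv> density lborel std_normal_density"

lemma measurable_vec_nth_PiM_std_normal [measurable]:
  "(\<lambda>x::real^'n::finite. \<lambda>i. x $ i) \<in> borel \<rightarrow>\<^sub>M PiM UNIV (\<lambda>_. std_normal)"
  by (rule measurable_PiM_single') (auto simp: space_PiM)

definition std_normal_vec_density :: "real^'n::finite \<Rightarrow> real" where
  "std_normal_vec_density x = (\<Prod>i\<in>UNIV. std_normal_density (x $ i))"

lemma borel_measurable_std_normal_vec_density [measurable]:
  "std_normal_vec_density \<in> borel_measurable borel"
  unfolding std_normal_vec_density_def by measurable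

lemma std_normal_vec_density_eq:
  "std_normal_vec_density (x::real^'n::finite) = (1 / sqrt (2 * pi)) ^ CARD('n) * exp (- (x \<bullet> x) / 2)"
proof -
  have "std_normal_vec_density x = (\<Prod>i\<in>UNIV. 1 / sqrt (2 * pi) * exp (- ((x $ i)\<^sup>2) / 2))"
    by (simp add: std_normal_vec_density_def std_normal_density_def)
  also have "\<dots> = (1 / sqrt (2 * pi)) ^ CARD('n) * exp (\<Sum>i\<in>UNIV. - ((x $ i)\<^sup>2) / 2)"
    by (simp only: prod.distrib prod_constant) (simp add: exp_sum)
  also have "(\<Sum>i\<in>UNIV. - ((x $ i)\<^sup>2) / 2) = - (x \<bullet> x) / 2"
    by (simp add: inner_vec_def sum_divide_distrib sum_negf power2_eq_square)
  finally show ?thesis .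
qed

lemma std_normal_vec_density_orthogonal:
  assumes "orthogonal_matrix Q"
  shows "std_normal_vec_density (Q *v x) = std_normal_vec_density x"
proof -
  have "orthogonal_transformation (\<lambda>x. Q *v x)"
    using assms by (simp add: orthogonal_transformation_matrix matrix_vector_mul_linear)
  then show ?thesis
    by (simp add: std_normal_vec_density_eq orthogonal_transformation_def)
qed

lemma prod_Basis_vec: "(\<Prod>b\<in>(Basis :: (real^'n::finite) set). f b) = (\<Prod>i\<in>UNIV. f (axis i 1))"
proof -
  have Basis: "(Basis :: (real^'n) set) = range (\<lambda>i. axis i 1)"
    by (auto simp: Basis_vec_def)
  show ?thesis
    unfolding Basis by (subst prod.reindex) (auto simp: inj_on_def axis_eq_axis)
qed

lemma PiM_std_normal_eq_distr_vec:
  "PiM UNIV (\<lambda>_::'n::finite. std_normal)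
     = distr (density lborel std_normal_vec_density) (PiM UNIV (\<lambda>_. std_normal)) (\<lambda>x i. x $ i)"
proof -
  interpret product_sigma_finite "\<lambda>_::'n. std_normal"
    by (simp add: product_sigma_finite_def prob_space_imp_sigma_finite prob_space_normal_density)
  let ?G = "density lborel (std_normal_vec_density :: real^'n \<Rightarrow> real)"
  show ?thesis
  proof (rule PiM_eqI[symmetric])
    fix A :: "'n \<Rightarrow> real set" assume "\<And>i. i \<in> UNIV \<Longrightarrow> A i \<in> sets std_normal"
    then have A [measurable]: "\<And>i. A i \<in> sets borel" by simp
    define B where "B = {x::real^'n. \<forall>i. x $ i \<in> A i}"
    have [measurable]: "B \<in> sets borel"
      unfolding B_def by measurable
    have "(\<lambda>x i. x $ i) -` PiE UNIV A = B"
      by (auto simp: B_def)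
    then have "emeasure (distr ?G (PiM UNIV (\<lambda>_. std_normal)) (\<lambda>x i. x $ i)) (PiE UNIV A) = emeasure ?G B"
      by (subst emeasure_distr) (auto intro!: sets_PiM_I_finite)
    also have "\<dots> = (\<integral>\<^sup>+ x. ennreal (std_normal_vec_density x) * indicator B x \<partial>lborel)"
      by (subst emeasure_density) auto
    also have "\<dots> = (\<integral>\<^sup>+ (x::real^'n). (\<Prod>b\<in>Basis.
        ennreal (std_normal_density (x \<bullet> b) * indicator (A (axis_index b)) (x \<bullet> b))) \<partial>lborel)"
    proof (rule nn_integral_cong)
      fix x :: "real^'n"
      have "(\<Prod>b\<in>Basis. std_normal_density (x \<bullet> b) * indicator (A (axis_index b)) (x \<bullet> b))
          = std_normal_vec_density x * indicator B x"
        by (auto simp: B_def prod_Basis_vec inner_axis std_normal_vec_density_def prod.distrib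
            indicator_def)
      then show "ennreal (std_normal_vec_density x) * indicator B x
          = (\<Prod>b\<in>Basis. ennreal (std_normal_density (x \<bullet> b) * indicator (A (axis_index b)) (x \<bullet> b)))"
        by (subst prod_ennreal) (auto simp: ennreal_mult' indicator_def)
    qed
    also have "\<dots> = (\<Prod>i\<in>UNIV. emeasure std_normal (A i))"
      by (subst nn_integral_lborel_prod)
        (auto simp: prod_Basis_vec emeasure_density ennreal_mult' ennreal_indicator)
    finally show "emeasure (distr ?G (PiM UNIV (\<lambda>_. std_normal)) (\<lambda>x i. x $ i)) (PiE UNIV A)
        = (\<Prod>i\<in>UNIV. emeasure std_normal (A i))" .
  qed simp_all
qed

definition rotate_fun :: "real^'n::finite^'n \<Rightarrow> ('n \<Rightarrow> real) \<Rightarrow> 'n \<Rightarrow> real" where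
  "rotate_fun Q \<omega> = (\<lambda>j. \<Sum>l\<in>UNIV. Q $ j $ l * \<omega> l)"

lemma measurable_rotate_fun [measurable]:
  "rotate_fun Q \<in> PiM UNIV (\<lambda>_. std_normal) \<rightarrow>\<^sub>M PiM UNIV (\<lambda>_. std_normal)"
  unfolding rotate_fun_def by (rule measurable_PiM_single') (auto simp: space_PiM)

lemma rotate_fun_vec_nth: "rotate_fun Q (\<lambda>i. x $ i) = (\<lambda>i. (Q *v x) $ i)"
  by (simp add: rotate_fun_def matrix_vector_mult_def)

lemma PiM_std_normal_rotate_wellorder:
  fixes Q :: "real^'n::{finite,wellorder}^'n::_"
  assumes "orthogonal_matrix Q"
  shows "distr (PiM UNIV (\<lambda>_. std_normal)) (PiM UNIV (\<lambda>_. std_normal)) (rotate_fun Q) = PiM UNIV (\<lambda>_. std_normal)"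
proof -
  let ?G = "density lborel (std_normal_vec_density :: real^'n::_ \<Rightarrow> real)"
    and ?P = "PiM UNIV (\<lambda>_::'n::_. std_normal)"
  have "distr ?G borel (\<lambda>x. Q *v x) = density (distr lborel borel (\<lambda>x. Q *v x)) std_normal_vec_density"
    by (subst density_distr)
      (simp_all add: std_normal_vec_density_orthogonal[OF assms])
  then have G: "distr ?G borel (\<lambda>x. Q *v x) = ?G"
    by (simp add: lborel_orthogonal_invariant[OF assms])
  have "distr ?P ?P (rotate_fun Q) = distr (distr ?G ?P (\<lambda>x i. x $ i)) ?P (rotate_fun Q)"
    by (subst PiM_std_normal_eq_distr_vec) simp
  also have "\<dots> = distr ?G ?P (\<lambda>x i. (Q *v x) $ i)"
    by (subst distr_distr) (simp_all add: comp_def rotate_fun_vec_nth)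
  also have "\<dots> = distr (distr ?G borel (\<lambda>x. Q *v x)) ?P (\<lambda>x i. x $ i)"
    by (subst distr_distr) (simp_all add: comp_def)
  also have "\<dots> = ?P"
    by (simp add: G PiM_std_normal_eq_distr_vec[symmetric])
  finally show ?thesis .
qed

text \<open>The invariance of Lebesgue measure under orthogonal maps is available only for well-ordered
  index types; every finite type has a well-ordered copy, ordered by \<open>to_nat\<close>.\<close>

typedef 'a wellordered = "UNIV :: 'a set" by simp

instantiation wellordered :: (finite) linorder
begin
definition less_eq_wellordered :: "'a wellordered \<Rightarrow> 'a wellordered \<Rightarrow> bool" where
  "less_eq_wellordered x y \<longleftrightarrow> to_nat (Rep_wellordered x) \<le> to_nat (Rep_wellordered y)"
definition less_wellordered :: "'a wellordered \<Rightarrow> 'a wellordered \<Rightarrow> bool" where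
  "less_wellordered x y \<longleftrightarrow> to_nat (Rep_wellordered x) < to_nat (Rep_wellordered y)"
instance
  by standard (auto simp: less_eq_wellordered_def less_wellordered_def
      Rep_wellordered_inject[symmetric] dest: injD[OF inj_to_nat])
end

instance wellordered :: (finite) finite
proof
  have "(UNIV :: 'a wellordered set) = Abs_wellordered ` UNIV"
    by (metis Rep_wellordered_inverse UNIV_I image_eqI subsetI subset_antisym)
  then show "finite (UNIV :: 'a wellordered set)" by (metis finite_imageI finite)
qed

instance wellordered :: (finite) wellorder
proof
  fix P :: "'a wellordered \<Rightarrow> bool" and a
  assume step: "\<And>x. (\<And>y. y < x \<Longrightarrow> P y) \<Longrightarrow> P x"
  show "P a"
    by (induct a rule: measure_induct_rule[where f="\<lambda>x. to_nat (Rep_wellordered x)"])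
      (rule step, auto simp: less_wellordered_def)
qed

lemma sum_Rep_wellordered: "(\<Sum>b\<in>UNIV. g (Rep_wellordered b)) = (\<Sum>l\<in>UNIV. g l)"
  by (rule sum.reindex_bij_witness[of _ Abs_wellordered Rep_wellordered])
    (auto simp: Abs_wellordered_inverse Rep_wellordered_inverse)

definition wellordered_matrix :: "real^'n^'n \<Rightarrow> real^'n wellordered^'n wellordered" where
  "wellordered_matrix Q = (\<chi> a b. Q $ Rep_wellordered a $ Rep_wellordered b)"

lemma orthogonal_wellordered_matrix:
  fixes Q :: "real^'n::finite^'n"
  assumes "orthogonal_matrix Q"
  shows "orthogonal_matrix (wellordered_matrix Q)"
proof -
  have "(transpose (wellordered_matrix Q) ** wellordered_matrix Q) $ a $ b
      = (transpose Q ** Q) $ Rep_wellordered a $ Rep_wellordered b" for a b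
    using sum_Rep_wellordered[of "\<lambda>k. Q $ k $ Rep_wellordered a * Q $ k $ Rep_wellordered b"]
    by (simp add: matrix_matrix_mult_def transpose_def wellordered_matrix_def)
  then show ?thesis
    using assms by (simp add: orthogonal_matrix vec_eq_iff mat_def Rep_wellordered_inject)
qed

lemma rotate_fun_wellordered:
  "rotate_fun Q (\<lambda>j. \<omega> (Abs_wellordered j)) = (\<lambda>j. rotate_fun (wellordered_matrix Q) \<omega> (Abs_wellordered j))"
proof
  fix j
  show "rotate_fun Q (\<lambda>j. \<omega> (Abs_wellordered j)) j = rotate_fun (wellordered_matrix Q) \<omega> (Abs_wellordered j)"
    using sum_Rep_wellordered[of "\<lambda>l. Q $ j $ l * \<omega> (Abs_wellordered l)"]
    by (simp add: rotate_fun_def wellordered_matrix_def Abs_wellordered_inverse Rep_wellordered_inverse)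
qed

lemma PiM_std_normal_rotate:
  fixes Q :: "real^'n::finite^'n"
  assumes "orthogonal_matrix Q"
  shows "distr (PiM UNIV (\<lambda>_. std_normal)) (PiM UNIV (\<lambda>_. std_normal)) (rotate_fun Q) = PiM UNIV (\<lambda>_. std_normal)"
proof -
  let ?W = "PiM UNIV (\<lambda>_::'n wellordered. std_normal)" and ?P = "PiM UNIV (\<lambda>_::'n. std_normal)"
  let ?unwrap = "\<lambda>\<omega> j. \<omega> (Abs_wellordered j)"
  have [measurable]: "?unwrap \<in> ?W \<rightarrow>\<^sub>M ?P"
    by (rule measurable_PiM_single') (auto simp: space_PiM)
  have unwrap: "distr ?W ?P ?unwrap = ?P"
    using distr_PiM_reindex[of UNIV "\<lambda>_::'n wellordered. std_normal" Abs_wellordered "UNIV::'n set"]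
    by (simp add: prob_space_normal_density inj_on_def Abs_wellordered_inject restrict_def)
  have "distr ?P ?P (rotate_fun Q) = distr ?W ?P (\<lambda>\<omega>. rotate_fun Q (?unwrap \<omega>))"
    by (subst unwrap[symmetric], subst distr_distr) (simp_all add: comp_def)
  also have "\<dots> = distr (distr ?W ?W (rotate_fun (wellordered_matrix Q))) ?P ?unwrap"
    by (subst distr_distr) (simp_all add: comp_def rotate_fun_wellordered)
  also have "\<dots> = ?P"
    by (simp add: PiM_std_normal_rotate_wellorder orthogonal_wellordered_matrix assms unwrap)
  finally show ?thesis .
qed

definition uncurry_on :: "'i set \<Rightarrow> ('i \<Rightarrow> 'j \<Rightarrow> real) \<Rightarrow> 'i \<times> 'j \<Rightarrow> real" where
  "uncurry_on I \<omega> = (\<lambda>(i, j). if i \<in> I then \<omega> i j else undefined)"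

lemma measurable_uncurry_on [measurable]:
  fixes I :: "'i set"
  shows "uncurry_on I
    \<in> PiM I (\<lambda>_. PiM UNIV (\<lambda>_::'j. std_normal)) \<rightarrow>\<^sub>M PiM (I \<times> UNIV) (\<lambda>_. std_normal)"
proof (rule measurable_PiM_single')
  fix p :: "'i \<times> 'j" assume "p \<in> I \<times> UNIV"
  then have "(\<lambda>\<omega>. uncurry_on I \<omega> p) = (\<lambda>\<omega>. \<omega> (fst p) (snd p))"
    by (auto simp: uncurry_on_def)
  moreover have "(\<lambda>\<omega>. \<omega> (fst p) (snd p)) \<in> PiM I (\<lambda>_. PiM UNIV (\<lambda>_::'j. std_normal)) \<rightarrow>\<^sub>M std_normal"
  proof (rule measurable_compose[where f="\<lambda>\<omega>. \<omega> (fst p)"])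
    show "(\<lambda>\<omega>. \<omega> (fst p)) \<in> PiM I (\<lambda>_. PiM UNIV (\<lambda>_::'j. std_normal)) \<rightarrow>\<^sub>M PiM UNIV (\<lambda>_. std_normal)"
      using \<open>p \<in> I \<times> UNIV\<close> by (intro measurable_component_singleton) auto
  qed (rule measurable_component_singleton, simp)
  ultimately show "(\<lambda>\<omega>. uncurry_on I \<omega> p) \<in> PiM I (\<lambda>_. PiM UNIV (\<lambda>_::'j. std_normal)) \<rightarrow>\<^sub>M std_normal"
    by simp
qed (auto simp: uncurry_on_def space_PiM PiE_def extensional_def)

lemma PiM_std_normal_uncurry:
  fixes I :: "'i set"
  assumes "finite I" and "finite (UNIV :: 'j set)"
  shows "distr (PiM I (\<lambda>_. PiM UNIV (\<lambda>_::'j. std_normal))) (PiM (I \<times> UNIV) (\<lambda>_. std_normal))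
      (uncurry_on I) = PiM (I \<times> UNIV) (\<lambda>_. std_normal)"
proof -
  let ?C = "PiM I (\<lambda>_. PiM UNIV (\<lambda>_::'j. std_normal))" and ?F = "PiM (I \<times> UNIV) (\<lambda>_. std_normal)"
  have std_normal: "prob_space std_normal"
    by (simp add: prob_space_normal_density)
  interpret P: product_sigma_finite "\<lambda>_::'i \<times> 'j. std_normal"
    using std_normal by (simp add: product_sigma_finite_def prob_space_imp_sigma_finite)
  interpret Pj: product_sigma_finite "\<lambda>_::'j. std_normal"
    using std_normal by (simp add: product_sigma_finite_def prob_space_imp_sigma_finite)
  interpret Pi: product_sigma_finite "\<lambda>_::'i. PiM UNIV (\<lambda>_::'j. std_normal)"
    using std_normal by (simp add: product_sigma_finite_def prob_space_imp_sigma_finite prob_space_PiM)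
  show ?thesis
  proof (rule P.PiM_eqI)
    fix A :: "'i \<times> 'j \<Rightarrow> real set" assume A: "\<And>p. p \<in> I \<times> UNIV \<Longrightarrow> A p \<in> sets std_normal"
    have "uncurry_on I -` PiE (I \<times> UNIV) A \<inter> space ?C = PiE I (\<lambda>i. PiE UNIV (\<lambda>j. A (i, j)))"
      by (auto simp: uncurry_on_def space_PiM PiE_def extensional_def Pi_def)
    then have "emeasure (distr ?C ?F (uncurry_on I)) (PiE (I \<times> UNIV) A)
        = emeasure ?C (PiE I (\<lambda>i. PiE UNIV (\<lambda>j. A (i, j))))"
      using A assms by (subst emeasure_distr) (auto intro!: sets_PiM_I_finite)
    also have "\<dots> = (\<Prod>i\<in>I. \<Prod>j\<in>UNIV. emeasure std_normal (A (i, j)))"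
      using A assms by (simp add: Pi.emeasure_PiM Pj.emeasure_PiM sets_PiM_I_finite)
    also have "\<dots> = (\<Prod>p\<in>I \<times> UNIV. emeasure std_normal (A p))"
      by (simp add: prod.cartesian_product)
    finally show "emeasure (distr ?C ?F (uncurry_on I)) (PiE (I \<times> UNIV) A)
        = (\<Prod>p\<in>I \<times> UNIV. emeasure std_normal (A p))" .
  qed (use assms in simp_all)
qed

definition rotate_sample :: "real^'d^'d \<Rightarrow> nat \<Rightarrow> (nat \<times> 'd \<Rightarrow> real) \<Rightarrow> nat \<times> 'd \<Rightarrow> real" where
  "rotate_sample Q n \<omega> = (\<lambda>(i, j). if i < n then \<Sum>l\<in>UNIV. Q $ j $ l * \<omega> (i, l) else undefined)"

lemma rotate_sample_uncurry_on:
  "rotate_sample Q n (uncurry_on {..<n} \<omega>) = uncurry_on {..<n} (compose {..<n} (rotate_fun Q) \<omega>)"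
  by (auto simp: rotate_sample_def uncurry_on_def compose_def rotate_fun_def fun_eq_iff)

lemma measurable_rotate_sample [measurable]:
  fixes Q :: "real^'d::finite^'d"
  shows "rotate_sample Q n \<in> gauss_sample n \<rightarrow>\<^sub>M gauss_sample n"
  unfolding gauss_sample_def
proof (rule measurable_PiM_single')
  fix p :: "nat \<times> 'd" assume "p \<in> {..<n} \<times> UNIV"
  then obtain i j where p: "p = (i, j)" "i < n" by auto
  have "i < n \<Longrightarrow> (\<lambda>\<omega>. \<omega> (i, l)) \<in> borel_measurable (gauss_sample n)" for l
    unfolding gauss_sample_def by measurable
  with p have "(\<lambda>\<omega>. \<Sum>l\<in>UNIV. Q $ j $ l * \<omega> (i, l)) \<in> borel_measurable (gauss_sample n)"
    by measurable
  then show "(\<lambda>\<omega>. rotate_sample Q n \<omega> p) \<in> PiM ({..<n} \<times> UNIV) (\<lambda>_. std_normal) \<rightarrow>\<^sub>M std_normal"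
    using p by (simp add: rotate_sample_def gauss_sample_def)
qed (auto simp: rotate_sample_def space_PiM PiE_def extensional_def)

lemma gauss_sample_rotate:
  fixes Q :: "real^'d::finite^'d"
  assumes "orthogonal_matrix Q"
  shows "distr (gauss_sample n) (gauss_sample n) (rotate_sample Q n) = gauss_sample n"
proof -
  let ?V = "PiM UNIV (\<lambda>_::'d. std_normal)"
  let ?C = "PiM {..<n} (\<lambda>_. ?V)" and ?G = "gauss_sample n :: (nat \<times> 'd \<Rightarrow> real) measure"
  have uncurry: "distr ?C ?G (uncurry_on {..<n}) = ?G"
    unfolding gauss_sample_def by (rule PiM_std_normal_uncurry) simp_all
  have [measurable]: "uncurry_on {..<n} \<in> ?C \<rightarrow>\<^sub>M ?G"
    unfolding gauss_sample_def by measurable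
  have [measurable]: "compose {..<n} (rotate_fun Q) \<in> ?C \<rightarrow>\<^sub>M ?C"
    unfolding compose_def by measurable
  have V: "product_prob_space (\<lambda>_::nat. ?V)"
    by (simp add: product_prob_space_def product_prob_space_axioms_def product_sigma_finite_def
        prob_space_PiM prob_space_normal_density prob_space_imp_sigma_finite)
  have "distr ?G ?G (rotate_sample Q n)
      = distr (distr ?C ?G (uncurry_on {..<n})) ?G (rotate_sample Q n)"
    by (simp add: uncurry)
  also have "\<dots> = distr ?C ?G (\<lambda>\<omega>. rotate_sample Q n (uncurry_on {..<n} \<omega>))"
    by (subst distr_distr) (simp_all add: comp_def)
  also have "\<dots> = distr (distr ?C ?C (compose {..<n} (rotate_fun Q))) ?G (uncurry_on {..<n})"
    by (subst distr_distr) (simp_all add: comp_def rotate_sample_uncurry_on compose_def)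
  also have "distr ?C ?C (compose {..<n} (rotate_fun Q)) = ?C"
    by (subst distr_PiM_finite_prob_space[OF _ V V]) (simp_all add: PiM_std_normal_rotate assms)
  finally show ?thesis
    by (simp add: uncurry)
qed

lemma sample_cov_rotate_sample:
  "sample_cov n (rotate_sample Q n \<omega>) = Q ** sample_cov n \<omega> ** transpose Q"
proof -
  have "xvec (rotate_sample Q n \<omega>) i = Q *v xvec \<omega> i" if "i < n" for i
    using that by (simp add: vec_eq_iff xvec_def rotate_sample_def matrix_vector_mult_def)
  then have "sample_cov n (rotate_sample Q n \<omega>)
      = (1 / real n) *\<^sub>R (\<Sum>i<n. Q ** outer (xvec \<omega> i) (xvec \<omega> i) ** transpose Q)"
    by (simp add: sample_cov_def outer_matrix_vector_mult)
  also have "\<dots> = Q ** sample_cov n \<omega> ** transpose Q"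
    by (simp add: sample_cov_def linear_sum[OF linear_matrix_sandwich, unfolded o_def]
        linear_scale[OF linear_matrix_sandwich])
  finally show ?thesis .
qed

section \<open>Moments of the sample covariance\<close>

definition cov_moment :: "nat \<Rightarrow> nat \<Rightarrow> nat \<Rightarrow> real^'d::finite \<Rightarrow> real^'d \<Rightarrow> real^'d^'d" where
  "cov_moment n k k' a b = (\<integral>\<omega>. sample_cov n \<omega> ** outer a a ** mpow (sample_cov n \<omega>) k
      ** outer b b ** mpow (sample_cov n \<omega>) k' \<partial>gauss_sample n)"

lemma cov_moment_orthogonal:
  fixes Q :: "real^'d::finite^'d"
  assumes "orthogonal_matrix Q"
  shows "cov_moment n k k' (Q *v a) (Q *v b) = Q ** cov_moment n k k' a b ** transpose Q"
proof -
  let ?G = "gauss_sample n :: (nat \<times> 'd \<Rightarrow> real) measure"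
  let ?F = "\<lambda>a b S. S ** outer a a ** mpow S k ** outer b b ** mpow S k'"
  have conj: "?F (Q *v a) (Q *v b) (Q ** S ** transpose Q) = Q ** ?F a b S ** transpose Q" for S
    by (simp add: outer_matrix_vector_mult mpow_orthogonal_conj[OF assms] matrix_mul_assoc
        orthogonal_matrix_cancel[OF assms])
  have "cov_moment n k k' (Q *v a) (Q *v b)
      = integral\<^sup>L (distr ?G ?G (rotate_sample Q n)) (\<lambda>\<omega>. ?F (Q *v a) (Q *v b) (sample_cov n \<omega>))"
    by (simp add: cov_moment_def gauss_sample_rotate[OF assms])
  also have "\<dots> = (\<integral>\<omega>. Q ** ?F a b (sample_cov n \<omega>) ** transpose Q \<partial>?G)"
    by (subst integral_distr) (simp_all add: sample_cov_rotate_sample conj)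
  also have "\<dots> = Q ** cov_moment n k k' a b ** transpose Q"
    unfolding cov_moment_def
    by (rule integral_bounded_linear'[where T'="\<lambda>A. transpose Q ** A ** Q"])
      (simp_all add: linear_conv_bounded_linear[symmetric] linear_matrix_sandwich
        matrix_mul_assoc orthogonal_matrix_cancel[OF assms])
  finally show ?thesis .
qed

lemma cov_moment_scaleR_sign:
  "c * c = 1 \<Longrightarrow> d * d = 1 \<Longrightarrow> cov_moment n k k' (c *\<^sub>R a) (d *\<^sub>R b) = cov_moment n k k' a b"
  by (simp add: cov_moment_def outer_scaleR)

lemma cov_moment_axis_combination:
  fixes p q :: "'d::finite"
  shows "\<exists>\<alpha> \<beta> \<gamma>. cov_moment n k k' (axis p 1) (axis q 1)
    = \<alpha> *\<^sub>R outer (axis p 1) (axis p 1) + \<beta> *\<^sub>R outer (axis q 1) (axis q 1) + \<gamma> *\<^sub>R mat 1"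
proof -
  let ?M = "cov_moment n k k' (axis p 1) (axis q 1) :: real^'d^'d"
  have entry: "c x * c y * ?M $ x $ y = ?M $ \<sigma> x $ \<sigma> y"
    if c: "\<And>j. c j * c j = 1" and \<sigma>: "inj \<sigma>" "\<sigma> p = p" "\<sigma> q = q" for c \<sigma> x y
  proof -
    have "orthogonal_matrix (signed_perm_matrix c \<sigma>)"
      using c \<sigma>(1) by (rule orthogonal_signed_perm_matrix)
    then have "signed_perm_matrix c \<sigma> ** ?M ** transpose (signed_perm_matrix c \<sigma>)
        = cov_moment n k k' (c p *\<^sub>R axis p 1) (c q *\<^sub>R axis q 1)"
      by (simp add: cov_moment_orthogonal[symmetric] signed_perm_matrix_def \<sigma>)
    then have "signed_perm_matrix c \<sigma> ** ?M ** transpose (signed_perm_matrix c \<sigma>) = ?M"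
      by (simp add: c cov_moment_scaleR_sign)
    then show ?thesis
      using signed_perm_matrix_conj_nth[OF \<sigma>(1), where c=c and M="?M" and a=x and b=y] by simp
  qed
  show ?thesis
  proof (rule matrix_eq_outer_axis_combination)
    fix x y :: 'd assume "x \<noteq> y"
    then show "?M $ x $ y = 0"
      using entry[of "\<lambda>j. if j = x then -1 else 1" id x y] by simp
  next
    fix x y :: 'd assume "x \<notin> {p, q}" "y \<notin> {p, q}"
    then show "?M $ x $ x = ?M $ y $ y"
      using entry[of "\<lambda>_. 1" "id(x := y, y := x)" x x] by (auto simp: inj_swap_points)
  qed
qed

lemma cov_moment_orthonormal_frame:
  fixes v :: "'d::finite \<Rightarrow> real^'d"
  assumes "orthonormal_frame v"
    and "cov_moment n k k' (axis p 1) (axis q 1)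
      = \<alpha> *\<^sub>R outer (axis p 1) (axis p 1) + \<beta> *\<^sub>R outer (axis q 1) (axis q 1) + \<gamma> *\<^sub>R mat 1"
  shows "cov_moment n k k' (v p) (v q)
    = \<alpha> *\<^sub>R outer (v p) (v p) + \<beta> *\<^sub>R outer (v q) (v q) + \<gamma> *\<^sub>R mat 1"
proof -
  have Q: "orthogonal_matrix (cols_matrix v)"
    using assms(1) by (rule orthogonal_matrix_cols_matrix)
  show ?thesis
    using cov_moment_orthogonal[OF Q, where a="axis p 1" and b="axis q 1"]
    by (simp add: assms(2) orthogonal_conj_outer_combination[OF Q])
qed

theorem lemmaD7:
  fixes n k k' :: nat
  assumes "n \<ge> 1"
  shows "\<exists>\<alpha>1 \<alpha>2 \<alpha>3 \<alpha>4 \<alpha>5 :: real.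
    \<forall>u :: 'd::finite \<Rightarrow> real^'d.
      (\<forall>s t. u s \<bullet> u t = (if s = t then 1 else 0)) \<longrightarrow>
      (\<forall>s t. s \<noteq> t \<longrightarrow>
         (\<integral>\<omega>. sample_cov n \<omega> ** outer (u s) (u s) ** mpow (sample_cov n \<omega>) k
               ** outer (u t) (u t) ** mpow (sample_cov n \<omega>) k' \<partial>(gauss_sample n))
         = \<alpha>1 *\<^sub>R outer (u s) (u s) + \<alpha>2 *\<^sub>R outer (u t) (u t) + \<alpha>3 *\<^sub>R mat 1) \<and>
      (\<forall>s.
         (\<integral>\<omega>. sample_cov n \<omega> ** outer (u s) (u s) ** mpow (sample_cov n \<omega>) k
               ** outer (u s) (u s) ** mpow (sample_cov n \<omega>) k' \<partial>(gauss_sample n))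
         = \<alpha>4 *\<^sub>R outer (u s) (u s) + \<alpha>5 *\<^sub>R mat 1)"
proof -
  \<comment> \<open>The argument is one of symmetry only and does not need \<open>n \<ge> 1\<close>.\<close>
  fix p :: 'd
  obtain q :: 'd where q: "(\<exists>x. x \<noteq> p) \<longrightarrow> q \<noteq> p" by blast
  obtain \<alpha>1 \<alpha>2 \<alpha>3 where pq: "cov_moment n k k' (axis p 1) (axis q 1)
    = \<alpha>1 *\<^sub>R outer (axis p 1) (axis p 1) + \<alpha>2 *\<^sub>R outer (axis q 1) (axis q 1) + \<alpha>3 *\<^sub>R mat 1"
    using cov_moment_axis_combination by blast
  obtain \<beta>1 \<beta>2 \<beta>3 where pp: "cov_moment n k k' (axis p 1) (axis p 1)
    = \<beta>1 *\<^sub>R outer (axis p 1) (axis p 1) + \<beta>2 *\<^sub>R outer (axis p 1) (axis p 1) + \<beta>3 *\<^sub>R mat 1"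
    using cov_moment_axis_combination by blast
  show ?thesis
    unfolding cov_moment_def[symmetric]
  proof (intro exI allI impI conjI)
    fix u :: "'d \<Rightarrow> real^'d" and s t :: 'd
    assume u: "orthonormal_frame u" and "s \<noteq> t"
    then obtain \<sigma> where \<sigma>: "inj \<sigma>" "\<sigma> p = s" "\<sigma> q = t"
      using inj_map_two_points[of p q s t] q by metis
    show "cov_moment n k k' (u s) (u t)
      = \<alpha>1 *\<^sub>R outer (u s) (u s) + \<alpha>2 *\<^sub>R outer (u t) (u t) + \<alpha>3 *\<^sub>R mat 1"
      using cov_moment_orthonormal_frame[OF orthonormal_frame_comp[OF u \<sigma>(1)] pq] by (simp add: \<sigma>)
  next
    fix u :: "'d \<Rightarrow> real^'d" and s :: 'd
    assume u: "orthonormal_frame u"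
    obtain \<sigma> where \<sigma>: "inj \<sigma>" "\<sigma> p = s"
      using inj_swap_points[of p s] by fastforce
    show "cov_moment n k k' (u s) (u s) = (\<beta>1 + \<beta>2) *\<^sub>R outer (u s) (u s) + \<beta>3 *\<^sub>R mat 1"
      using cov_moment_orthonormal_frame[OF orthonormal_frame_comp[OF u \<sigma>(1)] pp]
      by (simp add: \<sigma> scaleR_add_left)
  qed
qed

end
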